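(* Let $m\le n$, $K\in\{0,\ldots,m-1\}$, $\gamma>0$, and let $\mathcal{C}\subset\mathbb{R}^{m\times n}$ satisfy condition (C1) and $-X\in\mathcal F(X;\mathcal C)$ for every $X\in\mathcal C$. Let $b\in\mathbb{R}^p$, $A_1,\ldots,A_p\in\mathbb{R}^{m\times n}$, $\mathcal{A}(X)=(A_1\bullet X,\ldots,A_p\bullet X)^\top$, and $f(X)=\frac12\|\mathcal A(X)-b\|_2^2$. Then every d-stationary point $X^*$ of $\min_X f(X)+\gamma\mathcal{T}_K(X)+\delta_{\mathcal C}(X)$ satisfies $\mathcal{T}_K(X^* )=0$ provided $$\gamma>\|\mathcal{A}^*\|_{2,2}\|b\|_2,$$ where $\mathcal{A}^*(y)=\sum_{i=1}^py_iA_i$ is the adjoint of $\mathcal A$ and $\|\mathcal{A}^*\|_{2,2}=\sup_{\|y\|_2=1}\|\mathcal{A}^*(y)\|_2$ with $\|\cdot\|_2$ the spectral norm on matrices.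
   Context: $X\bullet Y=\mathrm{tr}(X^\top Y)$. $\mathcal{T}_K(X)=\sum_{i=K+1}^{\min\{m,n\}}\sigma_i(X)$ (singular values in decreasing order). $\delta_{\mathcal C}$ = indicator of $\mathcal C$. Feasible cone $\mathcal{F}(X;\mathcal{C})=\{D\mid \exists\varsigma'>0:\ X+\varsigma D\in\mathcal{C}\ \forall\varsigma\in(0,\varsigma')\}$. Condition (C1): every $X\in\mathcal C$ has an SVD $X=U[\mathrm{diag}(\sigma_1(X),\ldots,\sigma_m(X)),0]V^\top$ with $-U[\mathrm{diag}(0,\ldots,0,\sigma_{K+1}(X),\ldots,\sigma_m(X)),0]V^\top\in\mathcal{F}(X;\mathcal C)$. $X^*\in\mathcal C$ is d-stationary if the objective's directional derivative at $X^*$ is $\ge0$ for all $D\in\mathcal F(X^*;\mathcal C)$. *)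

theory Defs
  imports Complex_Main "Jordan_Normal_Form.Matrix"
begin

(* Real m x n matrices are Jordan_Normal_Form matrices "real mat" in carrier_mat m n.
   Indices are 0-based: the paper's sigma_i is svals X (i-1). *)

definition mat_trace :: "real mat \<Rightarrow> real" where
  "mat_trace M = (\<Sum>i<dim_row M. M $$ (i, i))"

definition mat_inner :: "real mat \<Rightarrow> real mat \<Rightarrow> real" where
  "mat_inner X Y = mat_trace (transpose_mat X * Y)"

definition rect_diag :: "nat \<Rightarrow> nat \<Rightarrow> (nat \<Rightarrow> real) \<Rightarrow> real mat" where
  "rect_diag m n s = mat m n (\<lambda>(i, j). if i = j then s i else 0)"

definition orthogonal_mat :: "nat \<Rightarrow> real mat \<Rightarrow> bool" where
  "orthogonal_mat k U \<longleftrightarrow> U \<in> carrier_mat k k \<and> transpose_mat U * U = 1\<^sub>m k"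

definition is_svd :: "real mat \<Rightarrow> real mat \<Rightarrow> (nat \<Rightarrow> real) \<Rightarrow> real mat \<Rightarrow> bool" where
  "is_svd X U s V \<longleftrightarrow>
     orthogonal_mat (dim_row X) U \<and> orthogonal_mat (dim_col X) V \<and>
     (\<forall>i<min (dim_row X) (dim_col X). 0 \<le> s i) \<and>
     (\<forall>i j. i \<le> j \<longrightarrow> j < min (dim_row X) (dim_col X) \<longrightarrow> s j \<le> s i) \<and>
     (\<forall>i. min (dim_row X) (dim_col X) \<le> i \<longrightarrow> s i = 0) \<and>
     X = U * rect_diag (dim_row X) (dim_col X) s * transpose_mat V"

definition svals :: "real mat \<Rightarrow> nat \<Rightarrow> real" where
  "svals X = (THE s. \<exists>U V. is_svd X U s V)"

(* T_K(X) = sum_{i=K+1}^{min m n} sigma_i(X) *)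
definition trunc_sv :: "nat \<Rightarrow> real mat \<Rightarrow> real" where
  "trunc_sv K X = (\<Sum>i\<in>{K..<min (dim_row X) (dim_col X)}. svals X i)"

definition feasible_cone :: "real mat \<Rightarrow> real mat set \<Rightarrow> real mat set" where
  "feasible_cone X C = {D. D \<in> carrier_mat (dim_row X) (dim_col X) \<and>
     (\<exists>s'>0. \<forall>s. 0 < s \<and> s < s' \<longrightarrow> X + s \<cdot>\<^sub>m D \<in> C)}"

definition cond_C1 :: "nat \<Rightarrow> real mat set \<Rightarrow> bool" where
  "cond_C1 K C \<longleftrightarrow> (\<forall>X\<in>C. \<exists>U V. is_svd X U (svals X) V \<and>
     - (U * rect_diag (dim_row X) (dim_col X) (\<lambda>i. if K \<le> i then svals X i else 0)
          * transpose_mat V) \<in> feasible_cone X C)"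

definition dir_deriv :: "(real mat \<Rightarrow> real) \<Rightarrow> real mat \<Rightarrow> real mat \<Rightarrow> real" where
  "dir_deriv F X D = Lim (at_right 0) (\<lambda>t. (F (X + t \<cdot>\<^sub>m D) - F X) / t)"

(* d-stationarity of min F(X) + delta_C(X): the indicator vanishes along feasible
   directions for small step sizes, so only F contributes. *)
definition d_stationary :: "(real mat \<Rightarrow> real) \<Rightarrow> real mat set \<Rightarrow> real mat \<Rightarrow> bool" where
  "d_stationary F C X \<longleftrightarrow> X \<in> C \<and> (\<forall>D\<in>feasible_cone X C. 0 \<le> dir_deriv F X D)"

definition vnorm :: "nat \<Rightarrow> (nat \<Rightarrow> real) \<Rightarrow> real" where
  "vnorm p y = sqrt (\<Sum>i<p. (y i)\<^sup>2)"

definition spec_norm :: "real mat \<Rightarrow> real" where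
  "spec_norm M = Sup {vnorm (dim_row M) (\<lambda>r. \<Sum>c<dim_col M. M $$ (r, c) * v c) | v.
                       vnorm (dim_col M) v = 1}"

definition lin_map :: "nat \<Rightarrow> (nat \<Rightarrow> real mat) \<Rightarrow> real mat \<Rightarrow> nat \<Rightarrow> real" where
  "lin_map p A X = (\<lambda>i. if i < p then mat_inner (A i) X else 0)"

definition adj_map :: "nat \<Rightarrow> nat \<Rightarrow> nat \<Rightarrow> (nat \<Rightarrow> real mat) \<Rightarrow> (nat \<Rightarrow> real) \<Rightarrow> real mat" where
  "adj_map m n p A y = mat m n (\<lambda>(r, c). \<Sum>i<p. y i * A i $$ (r, c))"

definition adj_norm :: "nat \<Rightarrow> nat \<Rightarrow> nat \<Rightarrow> (nat \<Rightarrow> real mat) \<Rightarrow> real" where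
  "adj_norm m n p A = Sup {spec_norm (adj_map m n p A y) | y. vnorm p y = 1}"

definition lsq :: "nat \<Rightarrow> (nat \<Rightarrow> real mat) \<Rightarrow> (nat \<Rightarrow> real) \<Rightarrow> real mat \<Rightarrow> real" where
  "lsq p A b X = (1/2) * (\<Sum>i<p. (mat_inner (A i) X - b i)\<^sup>2)"

end

theory Submission
  imports Defs "Jordan_Normal_Form.Char_Poly" "HOL-Analysis.L2_Norm"
begin

(* Write Xs = U diag(sigma) V^T and let Y = U diag(0,...,0,sigma_(K+1),...,sigma_m) V^T.
   Singular values are unique (their squares are the eigenvalues of X X^T), so along both
   feasible directions -Y and -Xs the matrices stay in SVD form with shrunk tail, and T_K
   decreases at rate T_K(Xs). With the residual r = A(Xs) - b, d-stationarity along -Y gives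
   gamma T_K(Xs) <= -<A^*(r), Y> <= ||A^*||_{2,2} ||r|| T_K(Xs), the last step by duality of the
   spectral and nuclear norms; along -Xs it gives <r, A(Xs)> <= 0, i.e. ||r|| <= ||b||.
   Since gamma > ||A^*||_{2,2} ||b||, this forces T_K(Xs) = 0. *)

definition sv_seq :: "nat \<Rightarrow> (nat \<Rightarrow> real) \<Rightarrow> bool" where
  "sv_seq k s \<longleftrightarrow> (\<forall>i<k. 0 \<le> s i) \<and> (\<forall>i j. i \<le> j \<longrightarrow> j < k \<longrightarrow> s j \<le> s i) \<and> (\<forall>i\<ge>k. s i = 0)"

definition sv_tail :: "nat \<Rightarrow> (nat \<Rightarrow> real) \<Rightarrow> nat \<Rightarrow> real" where
  "sv_tail k s i = (if k \<le> i then s i else 0)"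

lemma sv_seq_minus_tail:
  assumes "sv_seq m \<sigma>" and "0 \<le> t" and "t \<le> 1"
  shows "sv_seq m (\<lambda>i. \<sigma> i - t * sv_tail k \<sigma> i)"
  unfolding sv_seq_def
proof (intro conjI allI impI)
  fix i j assume ij: "i \<le> j" "j < m"
  hence \<sigma>: "\<sigma> j \<le> \<sigma> i" "0 \<le> \<sigma> j" using assms(1) unfolding sv_seq_def by auto
  have shrink: "\<sigma> l - t * sv_tail k \<sigma> l = (if k \<le> l then (1 - t) * \<sigma> l else \<sigma> l)" for l
    by (simp add: sv_tail_def algebra_simps)
  have "(1 - t) * \<sigma> j \<le> (1 - t) * \<sigma> i" using \<sigma> assms by (intro mult_left_mono) auto
  moreover have "(1 - t) * \<sigma> j \<le> \<sigma> i" using \<sigma> assms by (intro mult_left_le_one_le[THEN order_trans]) auto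
  ultimately show "\<sigma> j - t * sv_tail k \<sigma> j \<le> \<sigma> i - t * sv_tail k \<sigma> i"
    unfolding shrink using ij \<sigma> by auto
qed (use assms in \<open>auto simp: sv_seq_def sv_tail_def algebra_simps mult_left_le_one_le\<close>)

lemma sv_tail_0 [simp]: "sv_tail 0 s = s"
  by (simp add: sv_tail_def fun_eq_iff)

lemma sum_sv_tail: "(\<Sum>i<m. sv_tail k \<sigma> i) = (\<Sum>i\<in>{k..<m}. \<sigma> i)"
proof -
  have "(\<Sum>i<m. sv_tail k \<sigma> i) = (\<Sum>i\<in>{i\<in>{..<m}. k \<le> i}. \<sigma> i)"
    unfolding sv_tail_def by (rule sum.inter_filter[symmetric]) simp
  also have "{i\<in>{..<m}. k \<le> i} = {k..<m}" by auto
  finally show ?thesis .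
qed

lemma is_svd_iff:
  assumes "X \<in> carrier_mat m n" and "m \<le> n"
  shows "is_svd X U s V \<longleftrightarrow> orthogonal_mat m U \<and> orthogonal_mat n V \<and> sv_seq m s
    \<and> X = U * rect_diag m n s * transpose_mat V"
proof -
  have "dim_row X = m" "dim_col X = n" "min m n = m" using assms by auto
  thus ?thesis unfolding is_svd_def sv_seq_def by auto
qed

lemma rect_diag_carrier [simp]: "rect_diag m n s \<in> carrier_mat m n"
  by (simp add: rect_diag_def)

lemma orthogonal_matD:
  assumes "orthogonal_mat k U"
  shows "U \<in> carrier_mat k k" "transpose_mat U * U = 1\<^sub>m k" "U * transpose_mat U = 1\<^sub>m k"
proof -
  show c: "U \<in> carrier_mat k k" and e: "transpose_mat U * U = 1\<^sub>m k"
    using assms by (simp_all add: orthogonal_mat_def)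
  show "U * transpose_mat U = 1\<^sub>m k"
    by (rule mat_mult_left_right_inverse[OF _ c e]) (use c in simp)
qed

lemma orthogonal_mat_col_vnorm:
  assumes "orthogonal_mat m U" and "k < m"
  shows "vnorm m (\<lambda>r. U $$ (r, k)) = 1"
proof -
  note U = orthogonal_matD[OF assms(1)]
  have "(\<Sum>r<m. U $$ (r, k) * U $$ (r, k)) = (transpose_mat U * U) $$ (k, k)"
    using U(1) assms by (simp add: scalar_prod_def lessThan_atLeast0)
  also have "\<dots> = 1" using U assms by simp
  finally show ?thesis unfolding vnorm_def by (simp add: power2_eq_square)
qed

lemma svd_mat_index:
  assumes "U \<in> carrier_mat m m" and "V \<in> carrier_mat n n" and "m \<le> n" and "r < m" and "c < n"
  shows "(U * rect_diag m n a * transpose_mat V) $$ (r, c) = (\<Sum>k<m. U $$ (r, k) * a k * V $$ (c, k))"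
proof -
  have "(U * rect_diag m n a * transpose_mat V) $$ (r, c)
     = (\<Sum>j<n. \<Sum>k<m. U $$ (r, k) * (if k = j then a k else 0) * V $$ (c, j))"
    using assms by (simp add: scalar_prod_def lessThan_atLeast0 rect_diag_def sum_distrib_right)
  also have "\<dots> = (\<Sum>k<m. \<Sum>j<n. if j = k then U $$ (r, k) * a k * V $$ (c, k) else 0)"
    by (subst sum.swap) (intro sum.cong refl, auto)
  also have "\<dots> = (\<Sum>k<m. U $$ (r, k) * a k * V $$ (c, k))"
    using assms by (intro sum.cong refl) auto
  finally show ?thesis .
qed

lemma svd_mat_minus_smult:
  assumes "U \<in> carrier_mat m m" and "V \<in> carrier_mat n n" and "m \<le> n"
  shows "U * rect_diag m n a * transpose_mat V + t \<cdot>\<^sub>m (- (U * rect_diag m n d * transpose_mat V))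
    = U * rect_diag m n (\<lambda>i. a i - t * d i) * transpose_mat V"
    (is "?L = ?R")
proof (rule eq_matI)
  fix r c assume "r < dim_row ?R" and "c < dim_col ?R"
  hence rc: "r < m" "c < n" using assms by auto
  hence "?L $$ (r, c) = (U * rect_diag m n a * transpose_mat V) $$ (r, c)
      - t * (U * rect_diag m n d * transpose_mat V) $$ (r, c)"
    using assms by simp
  thus "?L $$ (r, c) = ?R $$ (r, c)"
    using assms rc by (simp add: svd_mat_index sum_distrib_left sum_subtractf[symmetric] algebra_simps
        del: index_mult_mat)
qed (use assms in auto)

subsection \<open>Uniqueness of singular values\<close>

lemma order_prod_list_linear_factors:
  "order a (prod_list (map (\<lambda>x. [:-x, 1:]) (xs :: real list))) = count (mset xs) a"
proof (induction xs)
  case Nil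
  thus ?case by (simp add: order_0I)
next
  case (Cons x xs)
  have "prod_list (map (\<lambda>x. [:-x, 1:]) xs) \<noteq> 0"
    by (auto simp: prod_list_zero_iff)
  hence "[:-x, 1:] * prod_list (map (\<lambda>x. [:-x, 1:]) xs) \<noteq> 0"
    by (metis mult_eq_0_iff pCons_eq_0_iff zero_neq_one)
  from order_mult[OF this, of a]
  have "order a (prod_list (map (\<lambda>x. [:-x, 1:]) (x # xs))) =
        order a [:-x, 1:] + order a (prod_list (map (\<lambda>x. [:-x, 1:]) xs))" by simp
  moreover have "order a [:-x, 1:] = (if a = x then 1 else 0)"
    using order_power_n_n[of a 1] order_0I[of "[:-x, 1:]" a] by (cases "a = x") simp_all
  ultimately show ?case using Cons by auto
qed

lemma rect_diag_mult_transpose_index: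
  assumes "m \<le> n" and "i < m" and "j < m"
  shows "(rect_diag m n s * transpose_mat (rect_diag m n s)) $$ (i, j) = (if i = j then (s i)^2 else 0)"
proof -
  have "(rect_diag m n s * transpose_mat (rect_diag m n s)) $$ (i, j)
      = (\<Sum>k<n. (if i = k then s i else 0) * (if j = k then s j else 0))"
    using assms by (simp add: scalar_prod_def lessThan_atLeast0 rect_diag_def)
  also have "\<dots> = (\<Sum>k<n. if k = i then (if j = i then s i * s j else 0) else 0)"
    by (rule sum.cong) auto
  also have "\<dots> = (if i = j then (s i)^2 else 0)"
    using assms by (simp add: power2_eq_square)
  finally show ?thesis .
qed

lemma svd_mult_transpose:
  fixes s :: "nat \<Rightarrow> real"
  assumes U: "U \<in> carrier_mat m m" and V: "orthogonal_mat n V"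
  defines "R \<equiv> rect_diag m n s"
  shows "(U * R * transpose_mat V) * transpose_mat (U * R * transpose_mat V)
    = U * (R * transpose_mat R) * transpose_mat U"
proof -
  note V = orthogonal_matD[OF V]
  have R: "R \<in> carrier_mat m n" by (simp add: R_def)
  have UR: "U * R \<in> carrier_mat m n" using U R by auto
  have "transpose_mat (U * R * transpose_mat V) = V * (transpose_mat R * transpose_mat U)"
    using transpose_mult[OF UR, of "transpose_mat V" n] transpose_mult[OF U R] V(1) by simp
  hence "(U * R * transpose_mat V) * transpose_mat (U * R * transpose_mat V)
      = (U * R * transpose_mat V * V) * (transpose_mat R * transpose_mat U)"
    using U V R by (subst assoc_mult_mat[of _ m n _ n _ m]) auto
  also have "U * R * transpose_mat V * V = U * R * (transpose_mat V * V)"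
    using U V R by (subst assoc_mult_mat[of _ m n _ n _ n]) auto
  also have "\<dots> = U * R" using V UR by (simp add: right_mult_one_mat)
  also have "U * R * (transpose_mat R * transpose_mat U) = U * R * transpose_mat R * transpose_mat U"
    using U R by (subst assoc_mult_mat[of _ m n _ m _ m]) auto
  also have "\<dots> = U * (R * transpose_mat R) * transpose_mat U"
    using U R by (subst assoc_mult_mat[of _ m m _ n _ m]) auto
  finally show ?thesis .
qed

lemma char_poly_svd:
  assumes "is_svd X U s V" and "X \<in> carrier_mat m n" and "m \<le> n"
  shows "char_poly (X * transpose_mat X) = prod_list (map (\<lambda>x. [:-x, 1:]) (map (\<lambda>i. (s i)^2) [0..<m]))"
proof -
  have U: "orthogonal_mat m U" and V: "orthogonal_mat n V"
    and X: "X = U * rect_diag m n s * transpose_mat V"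
    using assms by (auto simp: is_svd_iff)
  note U = orthogonal_matD[OF U]
  define D where "D = rect_diag m n s * transpose_mat (rect_diag m n s)"
  have D: "D \<in> carrier_mat m m" unfolding D_def by (rule mult_carrier_mat[of _ m n]) auto
  have "similar_mat (X * transpose_mat X) D"
    using U D assms(2) unfolding X
    by (intro similar_matI[of _ _ U "transpose_mat U" m]) (auto simp: svd_mult_transpose[OF _ V] D_def)
  hence "char_poly (X * transpose_mat X) = char_poly D" by (rule char_poly_similar)
  also have "\<dots> = prod_list (map (\<lambda>x. [:-x, 1:]) (diag_mat D))"
    using D assms(3)
    by (intro char_poly_upper_triangular)
      (auto simp: upper_triangular_def D_def rect_diag_mult_transpose_index simp del: index_mult_mat)
  also have "diag_mat D = map (\<lambda>i. (s i)^2) [0..<m]"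
    using D assms(3) by (auto simp: diag_mat_def D_def rect_diag_mult_transpose_index simp del: index_mult_mat)
  finally show ?thesis .
qed

lemma sv_seq_sorted_squares:
  assumes "sv_seq m s"
  shows "sorted (rev (map (\<lambda>i. (s i)^2) [0..<m]))"
proof (rule sorted_iff_nth_mono[THEN iffD2], intro allI impI)
  fix i j assume ij: "i \<le> j" "j < length (rev (map (\<lambda>i. (s i)^2) [0..<m]))"
  hence "s (m - Suc i) \<le> s (m - Suc j)" "0 \<le> s (m - Suc i)"
    using assms unfolding sv_seq_def by auto
  thus "rev (map (\<lambda>i. (s i)^2) [0..<m]) ! i \<le> rev (map (\<lambda>i. (s i)^2) [0..<m]) ! j"
    using ij by (simp add: rev_nth power_mono)
qed

lemma is_svd_unique_svals:
  assumes "is_svd X U s V" and "is_svd X U' s' V'" and "X \<in> carrier_mat m n" and "m \<le> n"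
  shows "s = s'"
proof
  fix i
  let ?L = "map (\<lambda>i. (s i)^2) [0..<m]" and ?L' = "map (\<lambda>i. (s' i)^2) [0..<m]"
  have sv: "sv_seq m s" "sv_seq m s'" using assms by (auto simp: is_svd_iff)
  have "prod_list (map (\<lambda>x. [:-x, 1:]) ?L) = prod_list (map (\<lambda>x. [:-x, 1:]) ?L')"
    using char_poly_svd[OF assms(1,3,4)] char_poly_svd[OF assms(2,3,4)] by simp
  hence "mset (rev ?L) = mset (rev ?L')"
    by (metis mset_rev multiset_eq_iff order_prod_list_linear_factors)
  hence "rev ?L = rev ?L'"
    using sv_seq_sorted_squares[OF sv(1)] sv_seq_sorted_squares[OF sv(2)]
    by (metis properties_for_sort sorted_sort_id)
  hence "i < m \<Longrightarrow> (s i)^2 = (s' i)^2" by simp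
  thus "s i = s' i"
    using sv unfolding sv_seq_def by (cases "i < m") (auto simp: power2_eq_iff_nonneg)
qed

lemma svals_eqI:
  assumes "is_svd X U s V" and "X \<in> carrier_mat m n" and "m \<le> n"
  shows "svals X = s"
  unfolding svals_def
  by (rule the_equality) (use assms is_svd_unique_svals in blast)+

lemma trunc_sv_svd:
  assumes "orthogonal_mat m U" and "orthogonal_mat n V" and "m \<le> n" and "sv_seq m a"
  shows "trunc_sv K (U * rect_diag m n a * transpose_mat V) = (\<Sum>i\<in>{K..<m}. a i)"
proof -
  have c: "U * rect_diag m n a * transpose_mat V \<in> carrier_mat m n"
    using orthogonal_matD(1)[OF assms(1)] orthogonal_matD(1)[OF assms(2)] by auto
  hence "svals (U * rect_diag m n a * transpose_mat V) = a"
    using assms by (intro svals_eqI[OF _ c assms(3)]) (simp add: is_svd_iff)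
  moreover have "dim_row (U * rect_diag m n a * transpose_mat V) = m"
    "dim_col (U * rect_diag m n a * transpose_mat V) = n" using c by auto
  ultimately show ?thesis using assms(3) unfolding trunc_sv_def by simp
qed

lemma mat_inner_sum:
  assumes "M \<in> carrier_mat m n" and "Y \<in> carrier_mat m n"
  shows "mat_inner M Y = (\<Sum>c<n. \<Sum>r<m. M $$ (r, c) * Y $$ (r, c))"
  using assms unfolding mat_inner_def mat_trace_def
  by (auto simp: scalar_prod_def lessThan_atLeast0 intro!: sum.cong)

lemma mat_inner_add_smult:
  assumes "M \<in> carrier_mat m n" and "X \<in> carrier_mat m n" and "D \<in> carrier_mat m n"
  shows "mat_inner M (X + t \<cdot>\<^sub>m D) = mat_inner M X + t * mat_inner M D"
proof -
  have "X + t \<cdot>\<^sub>m D \<in> carrier_mat m n" using assms by auto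
  hence "mat_inner M (X + t \<cdot>\<^sub>m D) = (\<Sum>c<n. \<Sum>r<m. M $$ (r, c) * X $$ (r, c) + t * (M $$ (r, c) * D $$ (r, c)))"
    using assms by (subst mat_inner_sum) (auto intro!: sum.cong simp: algebra_simps)
  also have "\<dots> = mat_inner M X + t * mat_inner M D"
    using assms by (simp add: mat_inner_sum sum.distrib sum_distrib_left)
  finally show ?thesis .
qed

lemma mat_inner_uminus:
  assumes "M \<in> carrier_mat m n" and "Y \<in> carrier_mat m n"
  shows "mat_inner M (- Y) = - mat_inner M Y"
proof -
  have "- Y \<in> carrier_mat m n" using assms by auto
  thus ?thesis using assms by (simp add: mat_inner_sum sum_negf[symmetric])
qed

lemma lsq_add_smult:
  assumes "\<forall>i<p. A i \<in> carrier_mat m n" and "X \<in> carrier_mat m n" and "D \<in> carrier_mat m n"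
  shows "lsq p A b (X + t \<cdot>\<^sub>m D) = lsq p A b X
     + t * (\<Sum>i<p. (mat_inner (A i) X - b i) * mat_inner (A i) D)
     + t^2 * ((1/2) * (\<Sum>i<p. (mat_inner (A i) D)^2))"
proof -
  have "lsq p A b (X + t \<cdot>\<^sub>m D) = (1/2) * (\<Sum>i<p. (mat_inner (A i) X - b i)^2
      + 2 * t * ((mat_inner (A i) X - b i) * mat_inner (A i) D) + t^2 * (mat_inner (A i) D)^2)"
    unfolding lsq_def using assms mat_inner_add_smult[of "A _" m n X D t]
    by (intro arg_cong[where f = "\<lambda>x. (1/2) * x"] sum.cong refl)
      (simp add: power2_eq_square algebra_simps)
  also have "\<dots> = (1/2) * ((\<Sum>i<p. (mat_inner (A i) X - b i)^2)
      + 2 * t * (\<Sum>i<p. (mat_inner (A i) X - b i) * mat_inner (A i) D)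
      + t^2 * (\<Sum>i<p. (mat_inner (A i) D)^2))"
    by (simp only: sum.distrib sum_distrib_left)
  finally show ?thesis unfolding lsq_def by (simp add: algebra_simps)
qed

lemma dir_deriv_eqI_quadratic:
  assumes "\<And>t. 0 < t \<Longrightarrow> t < 1 \<Longrightarrow> F (X + t \<cdot>\<^sub>m D) = F X + t * c + t^2 * q"
  shows "dir_deriv F X D = c"
proof -
  have "eventually (\<lambda>t. t \<in> {0<..<1}) (at_right (0::real))"
    by (rule eventually_at_right_real) simp
  hence "eventually (\<lambda>t. c + t * q = (F (X + t \<cdot>\<^sub>m D) - F X) / t) (at_right (0::real))"
    by (rule eventually_mono) (use assms in \<open>auto simp: field_simps power2_eq_square\<close>)
  moreover have "((\<lambda>t. c + t * q) \<longlongrightarrow> c) (at_right (0::real))"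
    using tendsto_add[OF tendsto_const tendsto_mult_left_zero[OF tendsto_ident_at]] by simp
  ultimately have "((\<lambda>t. (F (X + t \<cdot>\<^sub>m D) - F X) / t) \<longlongrightarrow> c) (at_right (0::real))"
    by (rule Lim_transform_eventually[rotated])
  thus ?thesis unfolding dir_deriv_def
    by (intro tendsto_Lim) (auto simp: trivial_limit_at_right_real)
qed

(* Shrinking sigma_i, i >= k, by the factor 1 - t keeps an SVD, so T_K is affine along -Y when k <= K. *)

lemma dir_deriv_minus_tail:
  fixes \<gamma> :: real
  assumes A: "\<forall>i<p. A i \<in> carrier_mat m n" and U: "orthogonal_mat m U" and V: "orthogonal_mat n V"
    and mn: "m \<le> n" and \<sigma>: "sv_seq m \<sigma>" and kK: "k \<le> K"
  defines "X \<equiv> U * rect_diag m n \<sigma> * transpose_mat V"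
    and "Y \<equiv> U * rect_diag m n (sv_tail k \<sigma>) * transpose_mat V"
  shows "dir_deriv (\<lambda>Z. lsq p A b Z + \<gamma> * trunc_sv K Z) X (- Y)
    = - (\<Sum>i<p. (mat_inner (A i) X - b i) * mat_inner (A i) Y) - \<gamma> * (\<Sum>i\<in>{K..<m}. \<sigma> i)"
proof (rule dir_deriv_eqI_quadratic)
  fix t :: real assume t: "0 < t" "t < 1"
  note Uc = orthogonal_matD(1)[OF U] and Vc = orthogonal_matD(1)[OF V]
  have X: "X \<in> carrier_mat m n" and Y: "Y \<in> carrier_mat m n"
    unfolding X_def Y_def using Uc Vc by auto
  have "trunc_sv K (X + t \<cdot>\<^sub>m (- Y)) = (\<Sum>i\<in>{K..<m}. \<sigma> i - t * sv_tail k \<sigma> i)"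
    unfolding X_def Y_def svd_mat_minus_smult[OF Uc Vc mn]
    using sv_seq_minus_tail[OF \<sigma>] t by (intro trunc_sv_svd[OF U V mn]) auto
  also have "\<dots> = (1 - t) * (\<Sum>i\<in>{K..<m}. \<sigma> i)"
    using kK by (simp add: sum_distrib_left sv_tail_def algebra_simps)
  finally have trXY: "trunc_sv K (X + t \<cdot>\<^sub>m (- Y)) = (1 - t) * (\<Sum>i\<in>{K..<m}. \<sigma> i)" .
  have trX: "trunc_sv K X = (\<Sum>i\<in>{K..<m}. \<sigma> i)"
    unfolding X_def by (rule trunc_sv_svd[OF U V mn \<sigma>])
  have "mat_inner (A i) (- Y) = - mat_inner (A i) Y" if "i < p" for i
    using A Y that mat_inner_uminus by blast
  hence lin: "(\<Sum>i<p. (mat_inner (A i) X - b i) * mat_inner (A i) (- Y))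
      = - (\<Sum>i<p. (mat_inner (A i) X - b i) * mat_inner (A i) Y)"
    and quad: "(\<Sum>i<p. (mat_inner (A i) (- Y))^2) = (\<Sum>i<p. (mat_inner (A i) Y)^2)"
    by (simp_all add: sum_negf[symmetric])
  have "- Y \<in> carrier_mat m n" using Y by simp
  from lsq_add_smult[OF A X this, of b t]
  show "lsq p A b (X + t \<cdot>\<^sub>m (- Y)) + \<gamma> * trunc_sv K (X + t \<cdot>\<^sub>m (- Y))
    = lsq p A b X + \<gamma> * trunc_sv K X
      + t * (- (\<Sum>i<p. (mat_inner (A i) X - b i) * mat_inner (A i) Y) - \<gamma> * (\<Sum>i\<in>{K..<m}. \<sigma> i))
      + t^2 * ((1/2) * (\<Sum>i<p. (mat_inner (A i) Y)^2))"
    unfolding trXY trX lin quad by (simp add: algebra_simps)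
qed

subsection \<open>Spectral norm bounds\<close>

lemma vnorm_eq_L2_set: "vnorm n v = L2_set v {..<n}"
  by (simp add: vnorm_def L2_set_def)

lemma abs_le_one_if_vnorm_eq_1:
  assumes "vnorm n v = 1" and "c < n"
  shows "\<bar>v c\<bar> \<le> 1"
proof -
  have "(v c)^2 \<le> (\<Sum>i<n. (v i)^2)" using assms(2) by (intro member_le_sum) auto
  hence "sqrt ((v c)^2) \<le> vnorm n v" unfolding vnorm_def by (rule real_sqrt_le_mono)
  thus ?thesis using assms(1) by simp
qed

lemma vnorm_mat_vec_le_sum_abs:
  assumes "vnorm (dim_col M) v = 1"
  shows "vnorm (dim_row M) (\<lambda>r. \<Sum>c<dim_col M. M $$ (r, c) * v c)
    \<le> (\<Sum>r<dim_row M. \<Sum>c<dim_col M. \<bar>M $$ (r, c)\<bar>)"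
proof -
  have "vnorm (dim_row M) (\<lambda>r. \<Sum>c<dim_col M. M $$ (r, c) * v c)
      \<le> (\<Sum>r<dim_row M. \<bar>\<Sum>c<dim_col M. M $$ (r, c) * v c\<bar>)"
    unfolding vnorm_eq_L2_set by (rule L2_set_le_sum_abs)
  also have "\<dots> \<le> (\<Sum>r<dim_row M. \<Sum>c<dim_col M. \<bar>M $$ (r, c)\<bar>)"
  proof (intro sum_mono order_trans[OF sum_abs])
    fix r c assume "c \<in> {..<dim_col M}"
    hence "\<bar>v c\<bar> \<le> 1" using abs_le_one_if_vnorm_eq_1[OF assms] by auto
    thus "\<bar>M $$ (r, c) * v c\<bar> \<le> \<bar>M $$ (r, c)\<bar>" by (simp add: abs_mult mult_left_le)
  qed
  finally show ?thesis .
qed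

lemma spec_norm_upper:
  assumes "vnorm (dim_col M) v = 1"
  shows "vnorm (dim_row M) (\<lambda>r. \<Sum>c<dim_col M. M $$ (r, c) * v c) \<le> spec_norm M"
  unfolding spec_norm_def
proof (rule cSup_upper)
  show "bdd_above {vnorm (dim_row M) (\<lambda>r. \<Sum>c<dim_col M. M $$ (r, c) * v c) | v. vnorm (dim_col M) v = 1}"
    using vnorm_mat_vec_le_sum_abs by (intro bdd_aboveI[of _ "\<Sum>r<dim_row M. \<Sum>c<dim_col M. \<bar>M $$ (r, c)\<bar>"]) blast
qed (use assms in blast)

lemma spec_norm_le_sum_abs:
  assumes "0 < dim_col M"
  shows "spec_norm M \<le> (\<Sum>r<dim_row M. \<Sum>c<dim_col M. \<bar>M $$ (r, c)\<bar>)"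
  unfolding spec_norm_def
proof (rule cSup_least)
  let ?e = "\<lambda>c::nat. if c = 0 then 1 else (0::real)"
  have "vnorm (dim_col M) ?e = 1" unfolding vnorm_def using assms
    by (subst sum.remove[of _ 0]) auto
  thus "{vnorm (dim_row M) (\<lambda>r. \<Sum>c<dim_col M. M $$ (r, c) * v c) | v. vnorm (dim_col M) v = 1} \<noteq> {}"
    by blast
qed (use vnorm_mat_vec_le_sum_abs in blast)

lemma spec_norm_bilinear_le:
  assumes "vnorm (dim_row G) u = 1" and "vnorm (dim_col G) v = 1"
  shows "\<bar>\<Sum>r<dim_row G. u r * (\<Sum>c<dim_col G. G $$ (r, c) * v c)\<bar> \<le> spec_norm G"
proof -
  let ?w = "\<lambda>r. \<Sum>c<dim_col G. G $$ (r, c) * v c"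
  have "\<bar>\<Sum>r<dim_row G. u r * ?w r\<bar> \<le> (\<Sum>r<dim_row G. \<bar>u r\<bar> * \<bar>?w r\<bar>)"
    by (rule order_trans[OF sum_abs]) (simp add: abs_mult)
  also have "\<dots> \<le> vnorm (dim_row G) u * vnorm (dim_row G) ?w"
    unfolding vnorm_eq_L2_set by (rule L2_set_mult_ineq)
  also have "\<dots> \<le> spec_norm G" using spec_norm_upper[OF assms(2)] assms(1) by simp
  finally show ?thesis .
qed

lemma mat_inner_svd_mat:
  assumes "G \<in> carrier_mat m n" and "U \<in> carrier_mat m m" and "V \<in> carrier_mat n n" and "m \<le> n"
  shows "mat_inner G (U * rect_diag m n \<tau> * transpose_mat V)
    = (\<Sum>k<m. \<tau> k * (\<Sum>r<m. U $$ (r, k) * (\<Sum>c<n. G $$ (r, c) * V $$ (c, k))))"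
proof -
  have "U * rect_diag m n \<tau> * transpose_mat V \<in> carrier_mat m n" using assms by auto
  hence "mat_inner G (U * rect_diag m n \<tau> * transpose_mat V)
      = (\<Sum>c<n. \<Sum>r<m. \<Sum>k<m. \<tau> k * (U $$ (r, k) * (G $$ (r, c) * V $$ (c, k))))"
    using assms by (subst mat_inner_sum[of _ m n]) (auto simp: svd_mat_index sum_distrib_left mult_ac
        simp del: index_mult_mat intro!: sum.cong)
  also have "\<dots> = (\<Sum>k<m. \<Sum>r<m. \<Sum>c<n. \<tau> k * (U $$ (r, k) * (G $$ (r, c) * V $$ (c, k))))"
    by (subst sum.swap, subst (2) sum.swap) (rule sum.cong, simp, rule sum.swap)
  also have "\<dots> = (\<Sum>k<m. \<tau> k * (\<Sum>r<m. U $$ (r, k) * (\<Sum>c<n. G $$ (r, c) * V $$ (c, k))))"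
    by (simp add: sum_distrib_left)
  finally show ?thesis .
qed

(* U diag(tau) V^T has nuclear norm sum tau: duality of the spectral and the nuclear norm. *)

lemma abs_mat_inner_svd_mat_le:
  assumes "G \<in> carrier_mat m n" and "orthogonal_mat m U" and "orthogonal_mat n V" and "m \<le> n"
    and "\<forall>k<m. 0 \<le> \<tau> k"
  shows "\<bar>mat_inner G (U * rect_diag m n \<tau> * transpose_mat V)\<bar> \<le> spec_norm G * (\<Sum>k<m. \<tau> k)"
proof -
  have "\<bar>\<Sum>r<m. U $$ (r, k) * (\<Sum>c<n. G $$ (r, c) * V $$ (c, k))\<bar> \<le> spec_norm G" if "k < m" for k
    using spec_norm_bilinear_le[of G "\<lambda>r. U $$ (r, k)" "\<lambda>c. V $$ (c, k)"] assms that
      orthogonal_mat_col_vnorm by auto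
  hence "\<bar>mat_inner G (U * rect_diag m n \<tau> * transpose_mat V)\<bar> \<le> (\<Sum>k<m. \<tau> k * spec_norm G)"
    unfolding mat_inner_svd_mat[OF assms(1) orthogonal_matD(1)[OF assms(2)] orthogonal_matD(1)[OF assms(3)] assms(4)]
    using assms(5) by (intro order_trans[OF sum_abs] sum_mono) (auto simp: abs_mult mult_left_mono)
  thus ?thesis by (simp add: sum_distrib_left mult.commute)
qed

lemma mat_inner_adj_map:
  assumes "\<forall>i<p. A i \<in> carrier_mat m n" and "Y \<in> carrier_mat m n"
  shows "mat_inner (adj_map m n p A y) Y = (\<Sum>i<p. y i * mat_inner (A i) Y)"
proof -
  have "mat_inner (adj_map m n p A y) Y = (\<Sum>c<n. \<Sum>r<m. \<Sum>i<p. y i * (A i $$ (r, c) * Y $$ (r, c)))"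
    using assms by (subst mat_inner_sum[of _ m n]) (auto simp: adj_map_def sum_distrib_left mult_ac)
  also have "\<dots> = (\<Sum>i<p. \<Sum>c<n. \<Sum>r<m. y i * (A i $$ (r, c) * Y $$ (r, c)))"
    by (subst (2) sum.swap, subst sum.swap) simp
  also have "\<dots> = (\<Sum>i<p. y i * mat_inner (A i) Y)"
  proof (intro sum.cong refl)
    fix i assume "i \<in> {..<p}"
    thus "(\<Sum>c<n. \<Sum>r<m. y i * (A i $$ (r, c) * Y $$ (r, c))) = y i * mat_inner (A i) Y"
      using assms by (simp add: mat_inner_sum[of "A i" m n] sum_distrib_left)
  qed
  finally show ?thesis .
qed

lemma adj_norm_upper:
  assumes "\<forall>i<p. A i \<in> carrier_mat m n" and "0 < n" and "vnorm p y = 1"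
  shows "spec_norm (adj_map m n p A y) \<le> adj_norm m n p A"
  unfolding adj_norm_def
proof (rule cSup_upper)
  let ?B = "\<Sum>r<m. \<Sum>c<n. \<Sum>i<p. \<bar>A i $$ (r, c)\<bar>"
  have "spec_norm (adj_map m n p A z) \<le> ?B" if z: "vnorm p z = 1" for z
  proof -
    have "spec_norm (adj_map m n p A z) \<le> (\<Sum>r<m. \<Sum>c<n. \<bar>\<Sum>i<p. z i * A i $$ (r, c)\<bar>)"
      using spec_norm_le_sum_abs[of "adj_map m n p A z"] assms(2) by (simp add: adj_map_def)
    also have "\<dots> \<le> ?B"
    proof (intro sum_mono order_trans[OF sum_abs])
      fix i assume "i \<in> {..<p}"
      hence "\<bar>z i\<bar> \<le> 1" using abs_le_one_if_vnorm_eq_1[OF z] by auto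
      thus "\<bar>z i * A i $$ (r, c)\<bar> \<le> \<bar>A i $$ (r, c)\<bar>" for r c
        by (simp add: abs_mult mult_left_le_one_le)
    qed
    finally show ?thesis .
  qed
  thus "bdd_above {spec_norm (adj_map m n p A y) | y. vnorm p y = 1}"
    by (intro bdd_aboveI[of _ ?B]) blast
qed (use assms in blast)

lemma abs_sum_mat_inner_svd_mat_le:
  assumes A: "\<forall>i<p. A i \<in> carrier_mat m n" and n: "0 < n"
    and U: "orthogonal_mat m U" and V: "orthogonal_mat n V" and mn: "m \<le> n" and \<tau>: "\<forall>k<m. 0 \<le> \<tau> k"
  shows "\<bar>\<Sum>i<p. e i * mat_inner (A i) (U * rect_diag m n \<tau> * transpose_mat V)\<bar>
     \<le> vnorm p e * adj_norm m n p A * (\<Sum>k<m. \<tau> k)"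
proof -
  define Y where "Y = U * rect_diag m n \<tau> * transpose_mat V"
  have Y: "Y \<in> carrier_mat m n" unfolding Y_def using orthogonal_matD(1)[OF U] orthogonal_matD(1)[OF V] by auto
  define \<nu> where "\<nu> = vnorm p e"
  have \<nu>0: "0 \<le> \<nu>" unfolding \<nu>_def vnorm_def by (simp add: sum_nonneg)
  show ?thesis
  proof (cases "\<nu> = 0")
    case True
    hence "\<forall>i<p. e i = 0" unfolding \<nu>_def vnorm_def by (simp add: sum_nonneg_eq_0_iff)
    thus ?thesis using True unfolding \<nu>_def by simp
  next
    case False
    define y where "y i = e i / \<nu>" for i
    have y: "vnorm p y = 1"
      using False \<nu>0 L2_set_right_distrib[of "inverse \<nu>" e "{..<p}"]
      unfolding vnorm_eq_L2_set y_def \<nu>_def by (simp add: divide_inverse mult.commute)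
    have "(\<Sum>i<p. e i * mat_inner (A i) Y) = \<nu> * mat_inner (adj_map m n p A y) Y"
      unfolding mat_inner_adj_map[OF A Y] sum_distrib_left y_def using False by simp
    also have "\<bar>\<dots>\<bar> \<le> \<nu> * (spec_norm (adj_map m n p A y) * (\<Sum>k<m. \<tau> k))"
      unfolding Y_def abs_mult abs_of_nonneg[OF \<nu>0] using \<nu>0 abs_mat_inner_svd_mat_le[OF _ U V mn \<tau>]
      by (intro mult_left_mono) (auto simp: adj_map_def)
    also have "\<dots> \<le> \<nu> * (adj_norm m n p A * (\<Sum>k<m. \<tau> k))"
      using \<nu>0 \<tau> adj_norm_upper[OF A n y] by (intro mult_left_mono mult_right_mono sum_nonneg) auto
    finally show ?thesis unfolding Y_def \<nu>_def by (simp add: mult.assoc)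
  qed
qed

lemma vnorm_residual_le:
  assumes "(\<Sum>i<p. (a i - b i) * a i) \<le> 0"
  shows "vnorm p (\<lambda>i. a i - b i) \<le> vnorm p b"
proof -
  have "(\<Sum>i<p. (a i - b i)^2) = (\<Sum>i<p. (b i)^2) - (\<Sum>i<p. (a i)^2) + 2 * (\<Sum>i<p. (a i - b i) * a i)"
    by (simp add: power2_eq_square algebra_simps sum.distrib sum_subtractf sum_distrib_left)
  also have "\<dots> \<le> (\<Sum>i<p. (b i)^2)"
    using assms sum_nonneg[of "{..<p}" "\<lambda>i. (a i)^2"] by simp
  finally show ?thesis unfolding vnorm_def by (rule real_sqrt_le_mono)
qed

lemma residual_le_if_dir_deriv_nonneg:
  fixes \<gamma> :: real
  assumes A: "\<forall>i<p. A i \<in> carrier_mat m n" and U: "orthogonal_mat m U" and V: "orthogonal_mat n V"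
    and mn: "m \<le> n" and \<sigma>: "sv_seq m \<sigma>" and "0 \<le> \<gamma>"
  defines "X \<equiv> U * rect_diag m n \<sigma> * transpose_mat V"
  assumes stat: "0 \<le> dir_deriv (\<lambda>Z. lsq p A b Z + \<gamma> * trunc_sv K Z) X (- X)"
  shows "vnorm p (\<lambda>i. mat_inner (A i) X - b i) \<le> vnorm p b"
proof (rule vnorm_residual_le)
  have "0 \<le> \<gamma> * (\<Sum>i\<in>{K..<m}. \<sigma> i)"
    using \<sigma> \<open>0 \<le> \<gamma>\<close> by (intro mult_nonneg_nonneg sum_nonneg) (auto simp: sv_seq_def)
  thus "(\<Sum>i<p. (mat_inner (A i) X - b i) * mat_inner (A i) X) \<le> 0"
    using stat dir_deriv_minus_tail[OF A U V mn \<sigma>, of 0 K b \<gamma>] unfolding X_def by simp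
qed

lemma tail_bound_if_dir_deriv_nonneg:
  fixes \<gamma> :: real and K :: nat
  assumes A: "\<forall>i<p. A i \<in> carrier_mat m n" and U: "orthogonal_mat m U" and V: "orthogonal_mat n V"
    and mn: "m \<le> n" and \<sigma>: "sv_seq m \<sigma>" and n: "0 < n"
  defines "X \<equiv> U * rect_diag m n \<sigma> * transpose_mat V"
    and "Y \<equiv> U * rect_diag m n (sv_tail K \<sigma>) * transpose_mat V"
  assumes stat: "0 \<le> dir_deriv (\<lambda>Z. lsq p A b Z + \<gamma> * trunc_sv K Z) X (- Y)"
  shows "\<gamma> * (\<Sum>i\<in>{K..<m}. \<sigma> i)
    \<le> vnorm p (\<lambda>i. mat_inner (A i) X - b i) * adj_norm m n p A * (\<Sum>i\<in>{K..<m}. \<sigma> i)"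
proof -
  have "\<gamma> * (\<Sum>i\<in>{K..<m}. \<sigma> i) \<le> - (\<Sum>i<p. (mat_inner (A i) X - b i) * mat_inner (A i) Y)"
    using stat dir_deriv_minus_tail[OF A U V mn \<sigma> order.refl, of b \<gamma>]
    unfolding X_def Y_def by simp
  also have "\<dots> \<le> \<bar>\<Sum>i<p. (mat_inner (A i) X - b i) * mat_inner (A i) Y\<bar>" by simp
  also have "\<dots> \<le> vnorm p (\<lambda>i. mat_inner (A i) X - b i) * adj_norm m n p A * (\<Sum>i\<in>{K..<m}. \<sigma> i)"
    using abs_sum_mat_inner_svd_mat_le[OF A n U V mn, of "sv_tail K \<sigma>"] \<sigma>
    unfolding Y_def sum_sv_tail by (simp add: sv_seq_def sv_tail_def)
  finally show ?thesis .
qed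

lemma eq_0_if_mult_le_mult:
  fixes T \<gamma> \<nu> \<beta> a :: real
  assumes "\<gamma> * T \<le> \<nu> * a * T" and "0 \<le> T" and "0 < \<gamma>" and "0 \<le> \<nu>" and "\<nu> \<le> \<beta>" and "\<beta> * a < \<gamma>"
  shows "T = 0"
proof -
  have "\<nu> * a < \<gamma>"
  proof (cases "a \<le> 0")
    case True
    thus ?thesis using assms(3,4) mult_nonneg_nonpos[of \<nu> a] by linarith
  next
    case False
    thus ?thesis using assms(5,6) mult_right_mono[of \<nu> \<beta> a] by linarith
  qed
  hence "(\<gamma> - \<nu> * a) * T \<le> 0 \<Longrightarrow> T \<le> 0" by (simp add: mult_le_0_iff)
  thus ?thesis using assms(1,2) by (simp add: algebra_simps)
qed

theorem mainTheorem17: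
  fixes m n K p :: nat and \<gamma> :: real and C :: "real mat set"
    and A :: "nat \<Rightarrow> real mat" and b :: "nat \<Rightarrow> real" and Xs :: "real mat"
  assumes "m \<le> n" and "K < m" and "0 < \<gamma>"
    and "C \<subseteq> carrier_mat m n"
    and "cond_C1 K C"
    and "\<forall>X\<in>C. - X \<in> feasible_cone X C"
    and "\<forall>i<p. A i \<in> carrier_mat m n"
    and "\<gamma> > adj_norm m n p A * vnorm p b"
    and "d_stationary (\<lambda>X. lsq p A b X + \<gamma> * trunc_sv K X) C Xs"
  shows "trunc_sv K Xs = 0"
proof -
  note mn = assms(1) and A = assms(7)
  have XC: "Xs \<in> C"
    and stat: "\<And>D. D \<in> feasible_cone Xs C \<Longrightarrow> 0 \<le> dir_deriv (\<lambda>X. lsq p A b X + \<gamma> * trunc_sv K X) Xs D"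
    using assms(9) unfolding d_stationary_def by auto
  have Xc: "Xs \<in> carrier_mat m n" using XC assms(4) by auto
  then obtain U V where svd: "is_svd Xs U (svals Xs) V"
    and feas: "- (U * rect_diag m n (sv_tail K (svals Xs)) * transpose_mat V) \<in> feasible_cone Xs C"
    using assms(5) XC unfolding cond_C1_def sv_tail_def by fastforce
  hence U: "orthogonal_mat m U" and V: "orthogonal_mat n V" and \<sigma>: "sv_seq m (svals Xs)"
    and X: "Xs = U * rect_diag m n (svals Xs) * transpose_mat V"
    using Xc mn by (auto simp: is_svd_iff)
  have residual: "vnorm p (\<lambda>i. mat_inner (A i) Xs - b i) \<le> vnorm p b"
    using residual_le_if_dir_deriv_nonneg[OF A U V mn \<sigma>] stat assms(3,6) XC X
    by (metis less_imp_le)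
  have bound: "\<gamma> * trunc_sv K Xs \<le> vnorm p (\<lambda>i. mat_inner (A i) Xs - b i) * adj_norm m n p A * trunc_sv K Xs"
    using tail_bound_if_dir_deriv_nonneg[OF A U V mn \<sigma>] stat[OF feas] assms(2) mn X
      trunc_sv_svd[OF U V mn \<sigma>] by simp
  have T0: "0 \<le> trunc_sv K Xs"
    using \<sigma> X trunc_sv_svd[OF U V mn \<sigma>] by (auto simp: sv_seq_def intro!: sum_nonneg)
  show ?thesis
    by (rule eq_0_if_mult_le_mult[OF bound T0 assms(3) _ residual])
      (use assms(8) in \<open>simp_all add: vnorm_def sum_nonneg mult.commute\<close>)
qed

end
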